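(* Let $C$ be an $(n,k)$ linear code over $H(\mathbb{Z})_{1+e_1+e_2}$. If $C$ corrects all errors of Lipschitz weight $2$ or less, then $(3^2)^{n-k}\ge 32n^2-24n+1$.
   Context: $H(\mathbb{Z})=\{a_0+a_1e_1+a_2e_2+a_3e_3:a_i\in\mathbb{Z}\}$ (Lipschitz integers) with quaternion multiplication $e_1^2=e_2^2=e_3^2=-1$, $e_1e_2=-e_2e_1=e_3$, $e_3e_1=-e_1e_3=e_2$, $e_2e_3=-e_3e_2=e_1$; $N(q)=a_0^2+a_1^2+a_2^2+a_3^2$. Right congruence: $q_1\equiv_r q_2 \pmod\pi$ iff $q_1-q_2=\delta\pi$ for some $\delta\in H(\mathbb{Z})$; $H(\mathbb{Z})_\pi=H(\mathbb{Z})/H(\mathbb{Z})\pi$, which has $N(\pi)^2$ elements (here $N(1+e_1+e_2)=3$). The Lipschitz weight of a class $\gamma$ is $\min\{|a_0|+|a_1|+|a_2|+|a_3| : a_0+a_1e_1+a_2e_2+a_3e_3\in\gamma\}$; the weight of a vector is the sum of the weights of its components. An $(n,k)$ linear code over $H(\mathbb{Z})_\pi$ is an additive subgroup $C\subseteq H(\mathbb{Z})_\pi^n$ such that $H(\mathbb{Z})_\pi^n/C$ has exactly $(N(\pi)^2)^{n-k}$ cosets. $C$ corrects all errors of weight $t$ or less if all vectors of Lipschitz weight at most $t$ lie in pairwise distinct cosets of $C$. *)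

theory Defs
  imports Main "HOL-Library.FuncSet"
begin

text \<open>Lipschitz integers a0 + a1 e1 + a2 e2 + a3 e3.\<close>
datatype lip = Lip int int int int

fun lip_add :: "lip \<Rightarrow> lip \<Rightarrow> lip" where
  "lip_add (Lip a0 a1 a2 a3) (Lip b0 b1 b2 b3) = Lip (a0+b0) (a1+b1) (a2+b2) (a3+b3)"

fun lip_neg :: "lip \<Rightarrow> lip" where
  "lip_neg (Lip a0 a1 a2 a3) = Lip (-a0) (-a1) (-a2) (-a3)"

definition lip_sub :: "lip \<Rightarrow> lip \<Rightarrow> lip" where
  "lip_sub p q = lip_add p (lip_neg q)"

definition lip_zero :: lip where "lip_zero = Lip 0 0 0 0"

text \<open>Quaternion product with e1^2=e2^2=e3^2=-1, e1e2=e3, e2e3=e1, e3e1=e2.\<close>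
fun lip_mult :: "lip \<Rightarrow> lip \<Rightarrow> lip" where
  "lip_mult (Lip a0 a1 a2 a3) (Lip b0 b1 b2 b3) =
     Lip (a0*b0 - a1*b1 - a2*b2 - a3*b3)
         (a0*b1 + a1*b0 + a2*b3 - a3*b2)
         (a0*b2 - a1*b3 + a2*b0 + a3*b1)
         (a0*b3 + a1*b2 - a2*b1 + a3*b0)"

fun lip_norm :: "lip \<Rightarrow> int" where
  "lip_norm (Lip a0 a1 a2 a3) = a0^2 + a1^2 + a2^2 + a3^2"

fun lip_abs :: "lip \<Rightarrow> nat" where
  "lip_abs (Lip a0 a1 a2 a3) = nat \<bar>a0\<bar> + nat \<bar>a1\<bar> + nat \<bar>a2\<bar> + nat \<bar>a3\<bar>"

definition rcong :: "lip \<Rightarrow> lip \<Rightarrow> lip \<Rightarrow> bool" where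
  "rcong pi q1 q2 \<longleftrightarrow> (\<exists>\<delta>. lip_sub q1 q2 = lip_mult \<delta> pi)"

definition cls :: "lip \<Rightarrow> lip \<Rightarrow> lip set" where
  "cls pi q = {p. rcong pi p q}"

definition Hpi :: "lip \<Rightarrow> lip set set" where
  "Hpi pi = range (cls pi)"

definition cls_add :: "lip set \<Rightarrow> lip set \<Rightarrow> lip set" where
  "cls_add A B = {lip_add a b | a b. a \<in> A \<and> b \<in> B}"

definition cls_neg :: "lip set \<Rightarrow> lip set" where
  "cls_neg A = lip_neg ` A"

definition cls_weight :: "lip set \<Rightarrow> nat" where
  "cls_weight \<gamma> = (LEAST w. \<exists>q\<in>\<gamma>. lip_abs q = w)"

definition vecs :: "lip \<Rightarrow> nat \<Rightarrow> (nat \<Rightarrow> lip set) set" where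
  "vecs pi n = PiE {..<n} (\<lambda>_. Hpi pi)"

definition vzero :: "lip \<Rightarrow> nat \<Rightarrow> nat \<Rightarrow> lip set" where
  "vzero pi n = restrict (\<lambda>_. cls pi lip_zero) {..<n}"

definition vadd :: "nat \<Rightarrow> (nat \<Rightarrow> lip set) \<Rightarrow> (nat \<Rightarrow> lip set) \<Rightarrow> nat \<Rightarrow> lip set" where
  "vadd n v w = restrict (\<lambda>i. cls_add (v i) (w i)) {..<n}"

definition vneg :: "nat \<Rightarrow> (nat \<Rightarrow> lip set) \<Rightarrow> nat \<Rightarrow> lip set" where
  "vneg n v = restrict (\<lambda>i. cls_neg (v i)) {..<n}"

definition vweight :: "nat \<Rightarrow> (nat \<Rightarrow> lip set) \<Rightarrow> nat" where
  "vweight n v = (\<Sum>i<n. cls_weight (v i))"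

definition additive_subgroup :: "lip \<Rightarrow> nat \<Rightarrow> (nat \<Rightarrow> lip set) set \<Rightarrow> bool" where
  "additive_subgroup pi n C \<longleftrightarrow> C \<subseteq> vecs pi n \<and> vzero pi n \<in> C \<and>
     (\<forall>v\<in>C. \<forall>w\<in>C. vadd n v w \<in> C) \<and> (\<forall>v\<in>C. vneg n v \<in> C)"

definition coset :: "nat \<Rightarrow> (nat \<Rightarrow> lip set) set \<Rightarrow> (nat \<Rightarrow> lip set) \<Rightarrow> (nat \<Rightarrow> lip set) set" where
  "coset n C v = vadd n v ` C"

definition linear_code :: "lip \<Rightarrow> nat \<Rightarrow> nat \<Rightarrow> (nat \<Rightarrow> lip set) set \<Rightarrow> bool" where
  "linear_code pi n k C \<longleftrightarrow> additive_subgroup pi n C \<and>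
     card (coset n C ` vecs pi n) = (nat (lip_norm pi) ^ 2) ^ (n - k)"

definition corrects :: "lip \<Rightarrow> nat \<Rightarrow> (nat \<Rightarrow> lip set) set \<Rightarrow> nat \<Rightarrow> bool" where
  "corrects pi n C t \<longleftrightarrow>
     (\<forall>v\<in>vecs pi n. \<forall>w\<in>vecs pi n. vweight n v \<le> t \<longrightarrow> vweight n w \<le> t \<longrightarrow> v \<noteq> w \<longrightarrow>
        coset n C v \<noteq> coset n C w)"

end

theory Submission
  imports Defs
begin

(* Proof idea: a sphere-packing (Hamming) bound.
   The nine Lipschitz integers of l1-size at most 1, namely 0, +-1, +-e1, +-e2, +-e3, have
   pairwise differences of norm 1, 2 or 4.  Since the norm is multiplicative (Euler's
   four-square identity), a difference of the form delta*pi has norm divisible by N(pi);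
   hence for every pi with N(pi) not in {1,2,4} (in particular for pi = 1+e1+e2, N(pi) = 3)
   these nine elements lie in nine distinct residue classes.
   Words of length n over this alphabet with total l1-size at most t therefore give
   pairwise distinct vectors of Lipschitz weight at most t.  A code correcting all errors of
   weight at most t puts them into pairwise distinct cosets, so their number c(n,t) is at
   most the number of cosets.  Counting by the first letter gives the recursion
   c(n+1,t) = c(n,t) + 8 c(n,t-1), whence c(n,2) = 32n^2 - 24n + 1, and the theorem follows
   from (N(pi)^2)^(n-k) = 9^(n-k) cosets. *)

text \<open>Euler's four-square identity: the norm is multiplicative.\<close>
lemma lip_norm_mult: "lip_norm (lip_mult a b) = lip_norm a * lip_norm b"
  by (cases a; cases b) (simp add: power2_eq_square algebra_simps)

lemma cls_self: "q \<in> cls pi q"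
proof -
  have "lip_sub q q = lip_mult lip_zero pi"
    by (cases q; cases pi) (simp add: lip_sub_def lip_zero_def)
  then show ?thesis unfolding cls_def rcong_def by blast
qed

lemma cls_weight_le: "cls_weight (cls pi q) \<le> lip_abs q"
  unfolding cls_weight_def by (rule Least_le) (use cls_self in blast)

lemma norm_dvd_of_same_cls:
  assumes "cls pi a = cls pi b"
  shows "lip_norm pi dvd lip_norm (lip_sub a b)"
proof -
  have "a \<in> cls pi b" using assms cls_self by metis
  then obtain \<delta> where "lip_sub a b = lip_mult \<delta> pi" by (auto simp: cls_def rcong_def)
  then show ?thesis by (simp add: lip_norm_mult)
qed

definition unit_lips :: "lip set" where
  "unit_lips = {Lip 0 0 0 0, Lip 1 0 0 0, Lip (-1) 0 0 0, Lip 0 1 0 0, Lip 0 (-1) 0 0,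
                Lip 0 0 1 0, Lip 0 0 (-1) 0, Lip 0 0 0 1, Lip 0 0 0 (-1)}"

lemma finite_unit_lips: "finite unit_lips"
  by (simp add: unit_lips_def)

lemma zero_in_unit_lips: "lip_zero \<in> unit_lips"
  by (simp add: unit_lips_def lip_zero_def)

text \<open>Eight nonzero letters: this is the factor 8 in the counting recursion.\<close>
lemma card_nonzero_unit_lips: "card (unit_lips - {lip_zero}) = 8"
  by (simp add: unit_lips_def lip_zero_def)

lemma lip_abs_unit_lips: "x \<in> unit_lips \<Longrightarrow> lip_abs x = (if x = lip_zero then 0 else 1)"
  by (auto simp: unit_lips_def lip_zero_def)

lemma norm_diff_unit_lips:
  "a \<in> unit_lips \<Longrightarrow> b \<in> unit_lips \<Longrightarrow> a \<noteq> b \<Longrightarrow> lip_norm (lip_sub a b) \<in> {1, 2, 4}"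
  by (auto simp: unit_lips_def lip_sub_def)

lemma nonneg_dvd_1_2_4:
  fixes d m :: int
  assumes "d dvd m" "m \<in> {1, 2, 4}" "0 \<le> d"
  shows "d \<in> {1, 2, 4}"
proof -
  have "d \<le> m" using assms by (auto intro: zdvd_imp_le)
  then have "d \<in> {0..4}" using assms by auto
  then have "d \<in> {0, 1, 2, 3, 4}" by auto
  then show ?thesis using assms by auto
qed

lemma cls_inj_unit_lips:
  assumes "lip_norm pi \<notin> {1, 2, 4}"
    and "a \<in> unit_lips" "b \<in> unit_lips" "cls pi a = cls pi b"
  shows "a = b"
proof (rule ccontr)
  assume "a \<noteq> b"
  then have "lip_norm (lip_sub a b) \<in> {1, 2, 4}"
    using assms(2,3) norm_diff_unit_lips by blast
  moreover have "0 \<le> lip_norm pi" by (cases pi) simp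
  ultimately have "lip_norm pi \<in> {1, 2, 4}"
    using norm_dvd_of_same_cls[OF assms(4)] nonneg_dvd_1_2_4 by blast
  then show False using assms(1) by blast
qed

definition words :: "nat \<Rightarrow> nat \<Rightarrow> lip list set" where
  "words n t = {xs. length xs = n \<and> set xs \<subseteq> unit_lips \<and> sum_list (map lip_abs xs) \<le> t}"

lemma finite_words: "finite (words n t)"
proof -
  have "words n t \<subseteq> {xs. set xs \<subseteq> unit_lips \<and> length xs = n}" by (auto simp: words_def)
  then show ?thesis using finite_lists_length_eq[OF finite_unit_lips] finite_subset by blast
qed

lemma words_0: "words 0 t = {[]}"
  by (auto simp: words_def)

lemma words_Suc_nonzero:
  "x \<in> unit_lips - {lip_zero} \<Longrightarrow> x # xs \<in> words (Suc n) t \<longleftrightarrow> t \<noteq> 0 \<and> xs \<in> words n (t - 1)"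
  using lip_abs_unit_lips[of x] by (auto simp: words_def)

lemma words_Suc:
  "words (Suc n) t = (\<lambda>xs. lip_zero # xs) ` words n t \<union>
     (\<lambda>(x, xs). x # xs) ` ((unit_lips - {lip_zero}) \<times> {xs \<in> words n (t - 1). t \<noteq> 0})"
    (is "?lhs = ?zero \<union> ?nonzero")
proof (intro set_eqI iffI)
  fix ys assume ys: "ys \<in> ?lhs"
  then obtain x xs where ys_eq: "ys = x # xs" and x: "x \<in> unit_lips"
    by (auto simp: words_def length_Suc_conv)
  show "ys \<in> ?zero \<union> ?nonzero"
  proof (cases "x = lip_zero")
    case True
    then have "xs \<in> words n t"
      using ys ys_eq by (auto simp: words_def lip_zero_def)
    then show ?thesis using True ys_eq by blast
  next
    case False
    then show ?thesis using ys ys_eq x words_Suc_nonzero[of x xs n t] by force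
  qed
next
  fix ys assume "ys \<in> ?zero \<union> ?nonzero"
  then show "ys \<in> ?lhs"
  proof
    assume "ys \<in> ?zero"
    then show ?thesis using zero_in_unit_lips by (auto simp: words_def lip_zero_def)
  next
    assume "ys \<in> ?nonzero"
    then obtain x xs where "ys = x # xs" "x \<in> unit_lips - {lip_zero}"
      "t \<noteq> 0" "xs \<in> words n (t - 1)" by auto
    then show ?thesis using words_Suc_nonzero by blast
  qed
qed

definition num_words :: "nat \<Rightarrow> nat \<Rightarrow> nat" where
  "num_words n t = card (words n t)"

lemma num_words_0: "num_words 0 t = 1"
  by (simp add: num_words_def words_0)

lemma num_words_Suc:
  "num_words (Suc n) t = num_words n t + (if t = 0 then 0 else 8 * num_words n (t - 1))"
proof -
  let ?S = "{xs \<in> words n (t - 1). t \<noteq> 0}"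
  have inj_zero: "inj_on (\<lambda>xs. lip_zero # xs) (words n t)"
    by (auto simp: inj_on_def)
  have inj_cons: "inj_on (\<lambda>(x, xs). x # xs) ((unit_lips - {lip_zero}) \<times> ?S)"
    by (auto simp: inj_on_def)
  have "num_words (Suc n) t = card ((\<lambda>xs. lip_zero # xs) ` words n t)
      + card ((\<lambda>(x, xs). x # xs) ` ((unit_lips - {lip_zero}) \<times> ?S))"
    unfolding num_words_def words_Suc
    by (rule card_Un_disjoint) (auto simp: finite_words finite_unit_lips)
  also have "\<dots> = card (words n t) + card ((unit_lips - {lip_zero}) \<times> ?S)"
    by (simp only: card_image[OF inj_zero] card_image[OF inj_cons])
  also have "\<dots> = num_words n t + 8 * card ?S"
    by (simp add: card_cartesian_product card_nonzero_unit_lips num_words_def)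
  finally show ?thesis by (simp add: num_words_def)
qed

lemma num_words_weight_0: "num_words n 0 = 1"
  by (induction n) (simp_all add: num_words_0 num_words_Suc)

lemma num_words_weight_1: "num_words n 1 = 1 + 8 * n"
  by (induction n) (simp_all add: num_words_0 num_words_Suc num_words_weight_0)

text \<open>The closed form c(n,2) = 32n^2 - 24n + 1, stated without subtraction.\<close>
lemma num_words_weight_2: "num_words n 2 + 24 * n = 32 * n^2 + 1"
proof (induction n)
  case (Suc n)
  have "num_words (Suc n) 2 = num_words n 2 + 8 * (1 + 8 * n)"
    using num_words_weight_1[of n] by (simp add: num_words_Suc)
  then show ?case using Suc by (simp add: power2_eq_square algebra_simps)
qed (simp add: num_words_0)

definition vec_of_word :: "lip \<Rightarrow> nat \<Rightarrow> lip list \<Rightarrow> nat \<Rightarrow> lip set" where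
  "vec_of_word pi n xs = restrict (\<lambda>i. cls pi (xs ! i)) {..<n}"

lemma vec_of_word_in_vecs: "vec_of_word pi n xs \<in> vecs pi n"
  by (auto simp: vec_of_word_def vecs_def Hpi_def)

lemma inj_on_vec_of_word:
  assumes "lip_norm pi \<notin> {1, 2, 4}"
  shows "inj_on (vec_of_word pi n) (words n t)"
proof (rule inj_onI)
  fix xs ys assume xs: "xs \<in> words n t" and ys: "ys \<in> words n t"
    and eq: "vec_of_word pi n xs = vec_of_word pi n ys"
  show "xs = ys"
  proof (rule nth_equalityI)
    show "length xs = length ys" using xs ys by (simp add: words_def)
    fix i assume "i < length xs"
    then have i: "i < n" using xs by (simp add: words_def)
    have "cls pi (xs ! i) = cls pi (ys ! i)"
      using fun_cong[OF eq, of i] i by (simp add: vec_of_word_def)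
    moreover have "xs ! i \<in> unit_lips" "ys ! i \<in> unit_lips"
      using xs ys i by (auto simp: words_def)
    ultimately show "xs ! i = ys ! i" using cls_inj_unit_lips[OF assms] by blast
  qed
qed

lemma vweight_vec_of_word:
  assumes "xs \<in> words n t"
  shows "vweight n (vec_of_word pi n xs) \<le> t"
proof -
  have len: "length xs = n" using assms by (simp add: words_def)
  have "vweight n (vec_of_word pi n xs) = (\<Sum>i<n. cls_weight (cls pi (xs ! i)))"
    by (simp add: vweight_def vec_of_word_def)
  also have "\<dots> \<le> (\<Sum>i<n. lip_abs (xs ! i))"
    by (rule sum_mono) (rule cls_weight_le)
  also have "\<dots> = sum_list (map lip_abs xs)"
    using len by (simp add: sum_list_sum_nth atLeast0LessThan)
  also have "\<dots> \<le> t" using assms by (simp add: words_def)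
  finally show ?thesis .
qed

lemma sphere_packing_bound:
  assumes "lip_norm pi \<notin> {1, 2, 4}"
    and "corrects pi n C t"
    and "finite (coset n C ` vecs pi n)"
  shows "num_words n t \<le> card (coset n C ` vecs pi n)"
proof -
  define V where "V = vec_of_word pi n ` words n t"
  have V_vecs: "V \<subseteq> vecs pi n"
    using vec_of_word_in_vecs V_def by auto
  have V_weight: "\<forall>v\<in>V. vweight n v \<le> t"
    using vweight_vec_of_word V_def by auto
  have inj_coset: "inj_on (coset n C) V"
    using assms(2) V_vecs V_weight unfolding corrects_def inj_on_def by blast
  have "num_words n t = card V"
    unfolding num_words_def V_def using card_image[OF inj_on_vec_of_word[OF assms(1)]] by simp
  also have "\<dots> = card (coset n C ` V)"
    using card_image[OF inj_coset] by simp
  also have "\<dots> \<le> card (coset n C ` vecs pi n)"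
    using assms(3) V_vecs by (intro card_mono) auto
  finally show ?thesis .
qed

theorem theorem7:
  fixes n k :: nat and C :: "(nat \<Rightarrow> lip set) set"
  assumes "k \<le> n"
    and "linear_code (Lip 1 1 1 0) n k C"
    and "corrects (Lip 1 1 1 0) n C 2"
  shows "(int (3^2)) ^ (n - k) \<ge> 32 * int n ^ 2 - 24 * int n + 1"
proof -
  have num_cosets: "card (coset n C ` vecs (Lip 1 1 1 0) n) = 9 ^ (n - k)"
    using assms(2) by (simp add: linear_code_def)
  then have "finite (coset n C ` vecs (Lip 1 1 1 0) n)"
    by (metis card.infinite power_not_zero zero_neq_numeral)
  then have "num_words n 2 \<le> 9 ^ (n - k)"
    using sphere_packing_bound[OF _ assms(3)] num_cosets by simp
  then have "int (num_words n 2) \<le> 9 ^ (n - k)"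
    by (metis of_nat_le_iff of_nat_numeral of_nat_power)
  moreover have "int (num_words n 2) + 24 * int n = 32 * int n ^ 2 + 1"
    using arg_cong[OF num_words_weight_2[of n], of int] by simp
  ultimately have "32 * int n ^ 2 - 24 * int n + 1 \<le> 9 ^ (n - k)" by linarith
  then show ?thesis by simp
qed

end
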